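(* Let $G$ be the path on $n\ge 3$ vertices. Then $$\mathcal{R}(G)=\begin{cases}\displaystyle\sum_{i=1}^{n/2}\frac{2n^2-3n-4i+4}{n(n-1)^2-2(n-1)(i-1)} & \text{if } n \text{ is even},\\[2ex] \displaystyle\frac{2n^2-3n-1}{2n(n-1)^2}+\sum_{i=1}^{\lfloor n/2\rfloor}\frac{2n^3-3n^2-4n(i-1)+1}{n^2(n-1)^2-2n(n-1)(i-1)} & \text{if } n \text{ is odd}.\end{cases}$$
   Context: All graphs are finite, simple and connected, with at least two vertices; $d(u,v)$ denotes the shortest-path distance. $V_p$ denotes the set of all unordered pairs $(u,v)$ of distinct vertices. A vertex $x$ resolves the pair $(u,v)$ if $d(x,u)\neq d(x,v)$. For $(u,v)\in V_p$, $R(u,v)$ is the set of all vertices resolving $(u,v)$ (it always contains $u$ and $v$). The resolving share of a vertex $w$ for $(u,v)$ is $r_w(u,v)=\frac{1}{|R(u,v)|}$ if $w$ resolves $u$ and $v$, and $r_w(u,v)=0$ otherwise. For a vertex $w$, $R(w)$ is the set of pairs in $V_p$ resolved by $w$. The average resolving share of $w$ is $ar_w(G)=\frac{1}{|R(w)|}\sum_{(u,v)\in R(w)} r_w(u,v)$, and the resolving topological index of $G$ is $\mathcal{R}(G)=\sum_{w\in V(G)} ar_w(G)$. *)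

theory Defs
  imports Complex_Main
begin

text \<open>A graph is given by a vertex set V and an edge relation E (intended finite, simple,
connected: E symmetric and irreflexive on V).\<close>

inductive walk :: "'a set \<Rightarrow> ('a \<Rightarrow> 'a \<Rightarrow> bool) \<Rightarrow> nat \<Rightarrow> 'a \<Rightarrow> 'a \<Rightarrow> bool"
  for V E where
  walk_refl: "u \<in> V \<Longrightarrow> walk V E 0 u u"
| walk_step: "u \<in> V \<Longrightarrow> E u w \<Longrightarrow> walk V E k w v \<Longrightarrow> walk V E (Suc k) u v"

definition gdist :: "'a set \<Rightarrow> ('a \<Rightarrow> 'a \<Rightarrow> bool) \<Rightarrow> 'a \<Rightarrow> 'a \<Rightarrow> nat" where
  "gdist V E u v = (LEAST k. walk V E k u v)"

definition Vp :: "'a set \<Rightarrow> 'a set set" where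
  "Vp V = {{u, v} | u v. u \<in> V \<and> v \<in> V \<and> u \<noteq> v}"

definition resolves :: "'a set \<Rightarrow> ('a \<Rightarrow> 'a \<Rightarrow> bool) \<Rightarrow> 'a \<Rightarrow> 'a \<Rightarrow> 'a \<Rightarrow> bool" where
  "resolves V E x u v \<longleftrightarrow> gdist V E x u \<noteq> gdist V E x v"

definition resolving_set :: "'a set \<Rightarrow> ('a \<Rightarrow> 'a \<Rightarrow> bool) \<Rightarrow> 'a \<Rightarrow> 'a \<Rightarrow> 'a set" where
  "resolving_set V E u v = {x \<in> V. resolves V E x u v}"

definition resolving_share :: "'a set \<Rightarrow> ('a \<Rightarrow> 'a \<Rightarrow> bool) \<Rightarrow> 'a \<Rightarrow> 'a \<Rightarrow> 'a \<Rightarrow> real" where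
  "resolving_share V E w u v =
     (if resolves V E w u v then 1 / real (card (resolving_set V E u v)) else 0)"

definition resolved_pairs :: "'a set \<Rightarrow> ('a \<Rightarrow> 'a \<Rightarrow> bool) \<Rightarrow> 'a \<Rightarrow> 'a set set" where
  "resolved_pairs V E w = {p \<in> Vp V. \<exists>u v. p = {u, v} \<and> resolves V E w u v}"

text \<open>Resolving share of w for an unordered pair p = {u,v} (independent of the order).\<close>
definition pair_share :: "'a set \<Rightarrow> ('a \<Rightarrow> 'a \<Rightarrow> bool) \<Rightarrow> 'a \<Rightarrow> 'a set \<Rightarrow> real" where
  "pair_share V E w p = (THE r. \<exists>u v. p = {u, v} \<and> r = resolving_share V E w u v)"

definition avg_resolving_share :: "'a set \<Rightarrow> ('a \<Rightarrow> 'a \<Rightarrow> bool) \<Rightarrow> 'a \<Rightarrow> real" where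
  "avg_resolving_share V E w =
     (1 / real (card (resolved_pairs V E w))) * (\<Sum>p\<in>resolved_pairs V E w. pair_share V E w p)"

definition resolving_index :: "'a set \<Rightarrow> ('a \<Rightarrow> 'a \<Rightarrow> bool) \<Rightarrow> real" where
  "resolving_index V E = (\<Sum>w\<in>V. avg_resolving_share V E w)"

definition path_V :: "nat \<Rightarrow> nat set" where "path_V n = {0..<n}"
definition path_E :: "nat \<Rightarrow> nat \<Rightarrow> bool" where "path_E i j \<longleftrightarrow> i + 1 = j \<or> j + 1 = i"

end

theory Submission
  imports Defs
begin

text \<open>On the path, d(x, u) = |x - u|, so x fails to resolve {u, v} exactly when x is the
  midpoint of u and v. Hence |R(u, v)| is n - 1 for pairs of even sum and n for pairs of odd sum,
  and a vertex w resolves all pairs except the m = min(w, n - 1 - w) pairs centred at it. So the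
  average share of w depends only on m; the vertices w and n - 1 - w contribute equally, and the
  sum over the path folds into twice a sum over m < n/2, plus the middle vertex when n is odd.
  The summation index of the closed form is i = m + 1.\<close>

lemma resolving_share_commute:
  "resolving_share V E w u v = resolving_share V E w v u"
  by (simp add: resolving_share_def resolves_def resolving_set_def eq_commute)

lemma pair_share_doubleton:
  "pair_share V E w {u, v} = resolving_share V E w u v"
  unfolding pair_share_def
  by (rule the_equality) (auto simp: doubleton_eq_iff resolving_share_commute)

lemma mem_path_V [simp]: "x \<in> path_V n \<longleftrightarrow> x < n"
  by (simp add: path_V_def)

lemma walk_path_imp_dist_le:
  assumes "walk (path_V n) path_E k u v"
  shows "u < n \<and> v < n \<and> nat \<bar>int u - int v\<bar> \<le> k"
  using assms by induction (auto simp: path_E_def)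

lemma walk_path_between:
  assumes "u < n" "v < n"
  shows "walk (path_V n) path_E (nat \<bar>int u - int v\<bar>) u v"
  using assms
proof (induction "nat \<bar>int u - int v\<bar>" arbitrary: u)
  case 0
  then show ?case by (simp add: walk_refl)
next
  case (Suc d)
  define u' where "u' = (if u < v then u + 1 else u - 1)"
  have "path_E u u'" "u' < n" "d = nat \<bar>int u' - int v\<bar>"
    using Suc.hyps(2) Suc.prems by (auto simp: u'_def path_E_def)
  with Suc show ?case
    using walk_step[of u "path_V n" path_E u' d v] by simp
qed

lemma gdist_path:
  assumes "u < n" "v < n"
  shows "gdist (path_V n) path_E u v = nat \<bar>int u - int v\<bar>"
  unfolding gdist_def
  using assms by (intro Least_equality walk_path_between) (auto dest: walk_path_imp_dist_le)

lemma resolves_path_iff: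
  assumes "x < n" "u < n" "v < n" "u \<noteq> v"
  shows "resolves (path_V n) path_E x u v \<longleftrightarrow> u + v \<noteq> 2 * x"
  using assms by (auto simp: resolves_def gdist_path)

lemma card_resolving_set_path:
  assumes "u < n" "v < n" "u \<noteq> v"
  shows "card (resolving_set (path_V n) path_E u v) = (if even (u + v) then n - 1 else n)"
proof -
  have "resolving_set (path_V n) path_E u v = {..<n} - {x. u + v = 2 * x}"
    using assms by (auto simp: resolving_set_def resolves_path_iff)
  moreover have "{x. u + v = 2 * x} = (if even (u + v) then {(u + v) div 2} else {})"
    by (auto elim!: evenE) presburger+
  moreover have "(u + v) div 2 < n"
    using assms by simp
  ultimately show ?thesis
    by simp
qed

lemma resolving_share_path:
  assumes "w < n" "u < n" "v < n" "u \<noteq> v" "u + v \<noteq> 2 * w"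
  shows "resolving_share (path_V n) path_E w u v =
    (if even (u + v) then 1 / (real n - 1) else 1 / real n)"
  using assms by (simp add: resolving_share_def resolves_path_iff card_resolving_set_path)

text \<open>A pair (v, u) with u < v stands for the vertex pair {u, v}; the centred pairs of w are
  those with midpoint w, i.e. exactly the pairs that w does not resolve.\<close>

definition path_pairs :: "nat \<Rightarrow> (nat \<times> nat) set" where
  "path_pairs n = (SIGMA v:{..<n}. {..<v})"

definition odd_pairs :: "nat \<Rightarrow> (nat \<times> nat) set" where
  "odd_pairs n = (SIGMA v:{..<n}. {u. u < v \<and> odd (u + v)})"

definition centred_pairs :: "nat \<Rightarrow> nat \<Rightarrow> (nat \<times> nat) set" where
  "centred_pairs n w = {(v, u). u < v \<and> v < n \<and> u + v = 2 * w}"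

lemma finite_path_pairs [simp]: "finite (path_pairs n)"
  by (simp add: path_pairs_def)

lemma centred_pairs_subset: "centred_pairs n w \<subseteq> path_pairs n - odd_pairs n"
  by (auto simp: centred_pairs_def path_pairs_def odd_pairs_def) presburger+

lemma odd_pairs_subset: "odd_pairs n \<subseteq> path_pairs n - centred_pairs n w"
  using centred_pairs_subset by (auto simp: path_pairs_def odd_pairs_def)

lemma card_path_pairs: "2 * card (path_pairs n) = n * (n - 1)"
proof -
  have "card (path_pairs n) = \<Sum>{0..<n}"
    by (simp add: path_pairs_def atLeast0LessThan)
  moreover have "even (n * (n - 1))"
    by (cases n) simp_all
  ultimately show ?thesis
    by (simp add: Sum_Ico_nat)
qed

lemma card_parity_below:
  "card {u. u < v \<and> odd (u + v)} = Suc v div 2 \<and> card {u. u < v \<and> even (u + v)} = v div 2"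
proof (induction v)
  case 0
  then show ?case by simp
next
  case (Suc v)
  have "{u. u < Suc v \<and> odd (u + Suc v)} = insert v {u. u < v \<and> even (u + v)}"
    by auto
  moreover have "{u. u < Suc v \<and> even (u + Suc v)} = {u. u < v \<and> odd (u + v)}"
    by (auto simp: less_Suc_eq)
  ultimately show ?case
    using Suc.IH by simp
qed

lemma card_odd_pairs: "4 * card (odd_pairs n) + n mod 2 = n ^ 2"
proof -
  have "card (odd_pairs n) = (\<Sum>v<n. card {u. u < v \<and> odd (u + v)})"
    unfolding odd_pairs_def by (rule card_SigmaI) auto
  also have "\<dots> = (\<Sum>v<n. Suc v div 2)"
    by (simp only: card_parity_below)
  finally have card: "card (odd_pairs n) = (\<Sum>v<n. Suc v div 2)" .
  show ?thesis
    unfolding card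
  proof (induction n)
    case 0
    then show ?case by simp
  next
    case (Suc n)
    have "4 * (Suc n div 2) + Suc n mod 2 = 2 * n + 1 + n mod 2"
      by (cases "even n") (auto elim!: evenE oddE)
    with Suc.IH show ?case
      by (simp add: power2_eq_square)
  qed
qed

lemma real_card_path_pairs: "real (card (path_pairs n)) = real n * (real n - 1) / 2"
proof -
  have "real (2 * card (path_pairs n)) = real (n * (n - 1))"
    by (simp only: card_path_pairs)
  then show ?thesis
    by (cases n) (simp_all add: algebra_simps)
qed

lemma real_card_odd_pairs: "real (card (odd_pairs n)) = (real n ^ 2 - real (n mod 2)) / 4"
proof -
  have "real (4 * card (odd_pairs n) + n mod 2) = real (n ^ 2)"
    by (simp only: card_odd_pairs)
  then show ?thesis
    by simp
qed

lemma card_centred_pairs: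
  assumes "w < n"
  shows "card (centred_pairs n w) = min w (n - 1 - w)"
proof -
  have "centred_pairs n w = (\<lambda>u. (2 * w - u, u)) ` {2 * w + 1 - n..<w}"
    by (auto simp: centred_pairs_def image_iff)
  moreover have "inj_on (\<lambda>u. (2 * w - u, u)) A" for A
    by (rule inj_onI) simp
  ultimately show ?thesis
    using assms by (simp add: card_image)
qed

lemma real_card_Diff_subset:
  "finite A \<Longrightarrow> B \<subseteq> A \<Longrightarrow> real (card (A - B)) = real (card A) - real (card B)"
  by (simp add: card_Diff_subset card_mono finite_subset)

lemma resolved_pairs_path:
  assumes "w < n"
  shows "resolved_pairs (path_V n) path_E w =
    (\<lambda>(v, u). {u, v}) ` (path_pairs n - centred_pairs n w)"
proof (intro set_eqI iffI)
  fix p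
  assume "p \<in> resolved_pairs (path_V n) path_E w"
  then obtain u v where p: "p = {u, v}" "resolves (path_V n) path_E w u v" "p \<in> Vp (path_V n)"
    by (auto simp: resolved_pairs_def)
  then have "u < n" "v < n" "u \<noteq> v"
    by (auto simp: Vp_def doubleton_eq_iff)
  with p(2) assms have "u + v \<noteq> 2 * w"
    by (simp add: resolves_path_iff)
  with \<open>u < n\<close> \<open>v < n\<close> \<open>u \<noteq> v\<close>
  have "(max u v, min u v) \<in> path_pairs n - centred_pairs n w"
    by (auto simp: path_pairs_def centred_pairs_def max_def min_def)
  moreover have "p = {min u v, max u v}"
    using p by (auto simp: min_def max_def)
  ultimately show "p \<in> (\<lambda>(v, u). {u, v}) ` (path_pairs n - centred_pairs n w)"
    by force
next
  fix p
  assume "p \<in> (\<lambda>(v, u). {u, v}) ` (path_pairs n - centred_pairs n w)"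
  then obtain u v where p: "p = {u, v}" "u < v" "v < n" "u + v \<noteq> 2 * w"
    by (auto simp: path_pairs_def centred_pairs_def)
  then have "p \<in> Vp (path_V n)"
    unfolding Vp_def mem_Collect_eq by (intro exI[of _ u] exI[of _ v]) simp
  moreover have "resolves (path_V n) path_E w u v"
    using p assms by (simp add: resolves_path_iff)
  ultimately show "p \<in> resolved_pairs (path_V n) path_E w"
    unfolding resolved_pairs_def using p(1) by blast
qed

lemma inj_on_path_pairs: "inj_on (\<lambda>(v, u). {u, v}) (path_pairs n)"
  by (auto intro!: inj_onI simp: path_pairs_def doubleton_eq_iff)

text \<open>Of the N = n(n - 1)/2 pairs, q = \<lfloor>n^2/4\<rfloor> have odd sum and are resolved by all n vertices,
  the others by n - 1 vertices; a vertex with m centred pairs resolves the N - m remaining ones.\<close>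

definition path_avg_share :: "nat \<Rightarrow> nat \<Rightarrow> real" where
  "path_avg_share n m =
    (let N = real n * (real n - 1) / 2; q = (real n ^ 2 - real (n mod 2)) / 4
     in (q / real n + (N - q - real m) / (real n - 1)) / (N - real m))"

lemma avg_resolving_share_path:
  assumes "w < n"
  shows "avg_resolving_share (path_V n) path_E w = path_avg_share n (min w (n - 1 - w))"
proof -
  let ?R = "resolved_pairs (path_V n) path_E w" and ?share = "pair_share (path_V n) path_E w"
  let ?S = "path_pairs n - centred_pairs n w" and ?O = "odd_pairs n"
  have inj: "inj_on (\<lambda>(v, u). {u, v}) ?S"
    using inj_on_path_pairs by (rule inj_on_subset) blast
  have share: "?share {u, v} = (if (v, u) \<in> ?O then 1 / real n else 1 / (real n - 1))"
    if "(v, u) \<in> ?S" for v u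
    using that assms
    by (auto simp: pair_share_doubleton resolving_share_path
        path_pairs_def centred_pairs_def odd_pairs_def)
  have "(\<Sum>p\<in>?R. ?share p) = (\<Sum>x\<in>?S. if x \<in> ?O then 1 / real n else 1 / (real n - 1))"
    unfolding resolved_pairs_path[OF assms] sum.reindex[OF inj]
    by (intro sum.cong) (auto simp: share)
  also have "\<dots> = real (card ?O) / real n + real (card (?S - ?O)) / (real n - 1)"
    using odd_pairs_subset[of n w] by (simp add: sum.If_cases Int_absorb1 Diff_eq)
  finally have sum: "(\<Sum>p\<in>?R. ?share p) =
      real (card ?O) / real n + real (card (?S - ?O)) / (real n - 1)" .
  have card_S: "real (card ?S) = real (card (path_pairs n)) - real (card (centred_pairs n w))"
    using centred_pairs_subset[of n w] by (intro real_card_Diff_subset) auto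
  have card_S_O: "real (card (?S - ?O)) = real (card ?S) - real (card ?O)"
    using odd_pairs_subset[of n w] by (intro real_card_Diff_subset) auto
  have "card ?R = card ?S"
    unfolding resolved_pairs_path[OF assms] using inj by (rule card_image)
  with sum show ?thesis
    by (simp add: avg_resolving_share_def path_avg_share_def Let_def card_S_O card_S
        real_card_path_pairs real_card_odd_pairs card_centred_pairs[OF assms])
qed

lemma resolving_index_path:
  "resolving_index (path_V n) path_E = (\<Sum>w<n. path_avg_share n (min w (n - 1 - w)))"
  unfolding resolving_index_def
  by (rule sum.cong) (auto simp: avg_resolving_share_path)

lemma sum_min_mirror:
  fixes h :: "nat \<Rightarrow> 'a::comm_semiring_1"
  shows "(\<Sum>w<n. h (min w (n - 1 - w))) =
    2 * (\<Sum>j<n div 2. h j) + (if odd n then h (n div 2) else 0)"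
proof -
  define k where "k = n div 2"
  have "(\<Sum>w<n. h (min w (n - 1 - w))) =
      (\<Sum>w<k. h (min w (n - 1 - w))) + (\<Sum>w\<in>{k..<n}. h (min w (n - 1 - w)))"
    using sum.atLeastLessThan_concat[where m = 0 and n = k and p = n]
    by (metis atLeast0LessThan div_le_dividend zero_le k_def)
  also have "(\<Sum>w<k. h (min w (n - 1 - w))) = (\<Sum>j<k. h j)"
    by (rule sum.cong) (auto simp: k_def)
  also have "(\<Sum>w\<in>{k..<n}. h (min w (n - 1 - w))) = (\<Sum>w\<in>{k..<n}. h (n - 1 - w))"
    by (rule sum.cong) (auto simp: k_def)
  also have "\<dots> = (\<Sum>j<n - k. h j)"
    by (rule sum.reindex_bij_witness[where i = "\<lambda>j. n - 1 - j" and j = "\<lambda>w. n - 1 - w"])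
      (auto simp: k_def)
  also have "n - k = k + (if odd n then 1 else 0)"
    unfolding k_def by presburger
  finally show ?thesis
    by (simp add: k_def mult_2 add.assoc)
qed

lemma path_avg_share_denominator_pos:
  assumes "2 \<le> n" "2 * m < n"
  shows "0 < real n * (real n - 1) - 2 * real m"
proof -
  have "real n * 1 \<le> real n * (real n - 1)"
    using assms(1) by (intro mult_left_mono) auto
  with assms(2) show ?thesis
    by linarith
qed

lemma path_avg_share_eq:
  assumes "2 \<le> n" "2 * m < n"
  shows "path_avg_share n m =
    (2 * real n ^ 3 - 3 * real n ^ 2 - 4 * real n * real m + real (n mod 2)) /
    (2 * real n * (real n - 1) * (real n * (real n - 1) - 2 * real m))"
proof -
  let ?x = "real n" and ?r = "real (n mod 2)"
  have "?x \<noteq> 0" "?x - 1 \<noteq> 0"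
    using assms(1) by auto
  then have num: "(?x ^ 2 - ?r) / 4 / ?x + (?x * (?x - 1) / 2 - (?x ^ 2 - ?r) / 4 - real m) / (?x - 1)
      = (2 * ?x ^ 3 - 3 * ?x ^ 2 - 4 * ?x * real m + ?r) / (4 * (?x * (?x - 1)))"
    by (simp add: field_simps power2_eq_square power3_eq_cube)
  have den: "?x * (?x - 1) / 2 - real m = (?x * (?x - 1) - 2 * real m) / 2"
    by simp
  have halve: "(a / (4 * (y * z))) / (d / 2) = a / (2 * y * z * d)" for a y z d :: real
    by simp
  show ?thesis
    unfolding path_avg_share_def Let_def num den by (rule halve)
qed

lemma path_avg_share_even:
  assumes "even n" "2 * m < n"
  shows "2 * path_avg_share n m =
    (2 * real n ^ 2 - 3 * real n - 4 * real (Suc m) + 4) /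
    (real n * (real n - 1) ^ 2 - 2 * (real n - 1) * (real (Suc m) - 1))"
proof -
  have n: "2 \<le> n" "n mod 2 = 0"
    using assms by (auto elim!: evenE)
  have D: "real n * (real n - 1) - 2 * real m \<noteq> 0"
    using path_avg_share_denominator_pos[OF n(1) assms(2)] by simp
  then have B: "2 * real n * (real n - 1) * (real n * (real n - 1) - 2 * real m) \<noteq> 0"
    using n(1) by simp
  have "real n * (real n - 1) ^ 2 - 2 * (real n - 1) * (real (Suc m) - 1) =
      (real n - 1) * (real n * (real n - 1) - 2 * real m)"
    by (simp add: algebra_simps power2_eq_square)
  with D n(1) have E: "real n * (real n - 1) ^ 2 - 2 * (real n - 1) * (real (Suc m) - 1) \<noteq> 0"
    by simp
  show ?thesis
    unfolding path_avg_share_eq[OF n(1) assms(2)] times_divide_eq_right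
    by (subst frac_eq_eq[OF B E]) (simp add: n(2) algebra_simps power2_eq_square power3_eq_cube)
qed

lemma path_avg_share_odd:
  assumes "odd n" "2 * m < n - 1"
  shows "2 * path_avg_share n m =
    (2 * real n ^ 3 - 3 * real n ^ 2 - 4 * real n * (real (Suc m) - 1) + 1) /
    (real n ^ 2 * (real n - 1) ^ 2 - 2 * real n * (real n - 1) * (real (Suc m) - 1))"
proof -
  have n: "2 \<le> n" "2 * m < n" "n mod 2 = 1"
    using assms by (auto elim!: oddE)
  have D: "real n * (real n - 1) - 2 * real m \<noteq> 0"
    using path_avg_share_denominator_pos[OF n(1,2)] by simp
  then have B: "2 * real n * (real n - 1) * (real n * (real n - 1) - 2 * real m) \<noteq> 0"
    using n(1) by simp
  have "real n ^ 2 * (real n - 1) ^ 2 - 2 * real n * (real n - 1) * (real (Suc m) - 1) =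
      real n * (real n - 1) * (real n * (real n - 1) - 2 * real m)"
    by (simp add: algebra_simps power2_eq_square)
  with D n(1) have E:
      "real n ^ 2 * (real n - 1) ^ 2 - 2 * real n * (real n - 1) * (real (Suc m) - 1) \<noteq> 0"
    by simp
  show ?thesis
    unfolding path_avg_share_eq[OF n(1,2)] times_divide_eq_right
    by (subst frac_eq_eq[OF B E]) (simp add: n(3) algebra_simps power2_eq_square power3_eq_cube)
qed

lemma path_avg_share_middle:
  assumes "odd n" "3 \<le> n"
  shows "path_avg_share n (n div 2) =
    (2 * real n ^ 2 - 3 * real n - 1) / (2 * real n * (real n - 1) ^ 2)"
proof -
  let ?x = "real n"
  have n: "2 \<le> n" "2 * (n div 2) < n" "n mod 2 = 1"
    using assms by (auto elim!: oddE)
  have half: "real (n div 2) = (?x - 1) / 2"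
    using assms(1) by (auto elim!: oddE)
  have num: "2 * ?x ^ 3 - 3 * ?x ^ 2 - 4 * ?x * ((?x - 1) / 2) + 1 =
      (?x - 1) * (2 * ?x ^ 2 - 3 * ?x - 1)"
    and den: "2 * ?x * (?x - 1) * (?x * (?x - 1) - 2 * ((?x - 1) / 2)) =
      (?x - 1) * (2 * ?x * (?x - 1) ^ 2)"
    by (simp_all add: field_simps power2_eq_square power3_eq_cube)
  have "?x - 1 \<noteq> 0"
    using assms(2) by simp
  then show ?thesis
    unfolding path_avg_share_eq[OF n(1,2)] half n(3) of_nat_1 num den
    by (rule mult_divide_mult_cancel_left)
qed

theorem theorem3p7:
  fixes n :: nat
  assumes "n \<ge> 3"
  shows "resolving_index (path_V n) path_E =
    (if even n then
       (\<Sum>i=1..n div 2. (2 * real n ^ 2 - 3 * real n - 4 * real i + 4) /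
                         (real n * (real n - 1) ^ 2 - 2 * (real n - 1) * (real i - 1)))
     else
       (2 * real n ^ 2 - 3 * real n - 1) / (2 * real n * (real n - 1) ^ 2)
       + (\<Sum>i=1..n div 2. (2 * real n ^ 3 - 3 * real n ^ 2 - 4 * real n * (real i - 1) + 1) /
                         (real n ^ 2 * (real n - 1) ^ 2 - 2 * real n * (real n - 1) * (real i - 1))))"
proof (cases "even n")
  case True
  have "resolving_index (path_V n) path_E = (\<Sum>j<n div 2. 2 * path_avg_share n j)"
    unfolding resolving_index_path sum_min_mirror using True by (simp add: sum_distrib_left)
  also have "\<dots> = (\<Sum>j<n div 2. (2 * real n ^ 2 - 3 * real n - 4 * real (Suc j) + 4) /
      (real n * (real n - 1) ^ 2 - 2 * (real n - 1) * (real (Suc j) - 1)))"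
    using True by (intro sum.cong refl path_avg_share_even) auto
  finally show ?thesis
    using True by (simp add: sum.atLeast1_atMost_eq)
next
  case False
  have "resolving_index (path_V n) path_E =
      path_avg_share n (n div 2) + (\<Sum>j<n div 2. 2 * path_avg_share n j)"
    unfolding resolving_index_path sum_min_mirror using False by (simp add: sum_distrib_left)
  also have "(\<Sum>j<n div 2. 2 * path_avg_share n j) =
      (\<Sum>j<n div 2. (2 * real n ^ 3 - 3 * real n ^ 2 - 4 * real n * (real (Suc j) - 1) + 1) /
        (real n ^ 2 * (real n - 1) ^ 2 - 2 * real n * (real n - 1) * (real (Suc j) - 1)))"
    using False by (intro sum.cong refl path_avg_share_odd) auto
  finally show ?thesis
    using False assms by (simp add: sum.atLeast1_atMost_eq path_avg_share_middle)
qed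

end
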